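(* Let $\mathcal{A}$ be any deterministic algorithm which takes as input a function $g:\mathbb{R}^d\to\mathbb{R}$, accesses $g$ only through zeroth-, first- and second-order oracle queries (values of $g$, $\nabla g$, $\nabla^2 g$ at query points), and outputs a single point $\tilde x(g)\in\mathbb{R}^d$. Then there exists a function $\mathfrak{f}:\mathbb{R}^d\to\mathbb{R}$ that is $1$-Lipschitz, has $8$-Lipschitz gradient, satisfies $\sup_x\mathfrak{f}(x)-\inf_x\mathfrak{f}(x)\le\frac1e$, and has a global minimizer $x^\star\in B(0,10)$, such that $\mathcal{A}(\mathfrak{f})$ must make at least $2^d$ oracle calls to find an $\epsilon$-global minimizer $x^\circ$ of $\mathfrak{f}$ with $\epsilon=\frac{1}{2e}$, i.e. a point with $\mathfrak{f}(x^\circ)-\mathfrak{f}(x^\star)\le\epsilon$.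
   Context: $B(c,r)$ denotes the closed Euclidean ball of radius $r$ centered at $c$. *)

theory Defs
  imports "HOL-Analysis.Analysis"
begin

text \<open>Gradient and Hessian of g : R^d -> R (d = CARD('n)). If they do not exist the
  value is an unspecified constant that does not depend on g.\<close>
definition grad :: "(real^'n \<Rightarrow> real) \<Rightarrow> real^'n \<Rightarrow> real^'n" where
  "grad g x = (SOME G. (g has_derivative (\<lambda>h. G \<bullet> h)) (at x))"

definition hess :: "(real^'n \<Rightarrow> real) \<Rightarrow> real^'n \<Rightarrow> real^'n^'n" where
  "hess g x = (SOME H. (grad g has_derivative (\<lambda>h. H *v h)) (at x))"

type_synonym 'n answer = "real \<times> (real^'n) \<times> (real^'n^'n)"

definition query_ans :: "(real^'n \<Rightarrow> real) \<Rightarrow> real^'n \<Rightarrow> 'n answer" where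
  "query_ans g x = (g x, grad g x, hess g x)"

text \<open>A deterministic algorithm: given the transcript so far (query points with oracle
  answers), it either issues a new query (Inl x) or stops and outputs a point (Inr y).\<close>
type_synonym 'n algorithm = "((real^'n) \<times> 'n answer) list \<Rightarrow> (real^'n) + (real^'n)"

fun transcript :: "'n algorithm \<Rightarrow> (real^'n \<Rightarrow> real) \<Rightarrow> nat \<Rightarrow> ((real^'n) \<times> 'n answer) list" where
  "transcript A g 0 = []"
| "transcript A g (Suc k) =
     (case A (transcript A g k) of
        Inl x \<Rightarrow> transcript A g k @ [(x, query_ans g x)]
      | Inr y \<Rightarrow> transcript A g k)"

definition halts_with :: "'n algorithm \<Rightarrow> (real^'n \<Rightarrow> real) \<Rightarrow> nat \<Rightarrow> real^'n \<Rightarrow> bool" where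
  "halts_with A g k y \<longleftrightarrow> length (transcript A g k) = k \<and> A (transcript A g k) = Inr y"

end

theory Submission
  imports Defs
begin

text \<open>The hard instance is the bump \<open>-(1/4) (1 - |x - c|\<^sup>2/4)\<^sub>+\<^sup>3\<close>, of depth \<open>1/4\<close> and supported
  in \<open>B(c,2)\<close>, hidden at a centre \<open>c\<close> the algorithm cannot find. Run the algorithm on the zero
  function and collect the \<open>2\<^sup>d\<close> points it queries or outputs during its first \<open>2\<^sup>d\<close> steps; as
  \<open>2\<^sup>d\<close> balls of radius 2 have less volume than \<open>B(0,10)\<close>, some \<open>c \<in> B(0,10)\<close> is at distance
  more than 2 from all of them. The bump agrees with the zero function near each of these points,
  so all oracle answers coincide, and a run on the bump that stops within fewer than \<open>2\<^sup>d\<close> steps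
  outputs a point where the bump vanishes, \<open>1/4 > 1/(2e)\<close> above its minimum.\<close>

lemma has_real_derivative_max0_power:
  "((\<lambda>t::real. (max 0 t) ^ Suc (Suc n)) has_real_derivative
      real (Suc (Suc n)) * (max 0 t) ^ Suc n) (at t)"
proof (cases "t = 0")
  case True
  have "((\<lambda>h::real. (max 0 h) ^ Suc (Suc n) / h) \<longlongrightarrow> 0) (at 0)"
  proof (rule Lim_null_comparison)
    have "\<bar>max 0 h ^ Suc (Suc n) / h\<bar> \<le> \<bar>h\<bar> ^ Suc n" for h :: real
    proof (cases "0 < h")
      case True
      then show ?thesis
        by simp
    next
      case False
      then have "max 0 h = 0"
        by simp
      then show ?thesis
        using zero_le_power_abs[of h "Suc n"] by simp
    qed
    then show "\<forall>\<^sub>F h in at 0. norm (max 0 h ^ Suc (Suc n) / h) \<le> \<bar>h\<bar> ^ Suc n"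
      by (simp add: always_eventually)
    show "((\<lambda>h::real. \<bar>h\<bar> ^ Suc n) \<longlongrightarrow> 0) (at 0)"
      by (rule tendsto_eq_intros refl)+ simp
  qed
  then show ?thesis
    using True by (simp add: DERIV_def)
next
  case False
  consider "t > 0" | "t < 0"
    using False by linarith
  then show ?thesis
  proof cases
    case 1
    have "((\<lambda>t::real. t ^ Suc (Suc n)) has_real_derivative
        real (Suc (Suc n)) * (max 0 t) ^ Suc n) (at t)"
      using DERIV_pow[of "Suc (Suc n)" t] 1 by (simp add: max_absorb2)
    then show ?thesis
      by (rule has_field_derivative_transform_within_open[where S="{0<..}"]) (use 1 in auto)
  next
    case 2
    show ?thesis
      by (rule has_field_derivative_transform_within_open[where S="{..<0}" and f="\<lambda>_. 0"])
        (use 2 in auto)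
  qed
qed

lemma lipschitz_on_UNIV_differentiable_bound:
  fixes f :: "'a::real_normed_vector \<Rightarrow> 'b::real_normed_vector"
  assumes "\<And>x. (f has_derivative f' x) (at x)" and "\<And>x. onorm (f' x) \<le> B"
  shows "B-lipschitz_on UNIV f"
proof (rule lipschitz_onI)
  show "0 \<le> B"
    using onorm_pos_le[OF has_derivative_bounded_linear[OF assms(1)]] assms(2) order_trans by blast
  show "dist (f x) (f y) \<le> B * dist x y" for x y
    using differentiable_bound[of UNIV f f' B x y] assms by (simp add: dist_norm)
qed

lemma exists_far_point_in_cball:
  fixes P :: "'a::euclidean_space set"
  assumes "finite P" "0 \<le> r" "0 \<le> R" "real (card P) * r ^ DIM('a) < R ^ DIM('a)"
  shows "\<exists>c. norm c \<le> R \<and> (\<forall>p\<in>P. r < dist p c)"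
proof (rule ccontr)
  assume no_far_point: "\<not> ?thesis"
  have cover: "cball 0 R \<subseteq> (\<Union>p\<in>P. cball p r)"
  proof
    fix x :: 'a
    assume "x \<in> cball 0 R"
    with no_far_point obtain p where "p \<in> P" "dist p x \<le> r"
      by (auto simp: not_less)
    then show "x \<in> (\<Union>p\<in>P. cball p r)"
      by auto
  qed
  let ?w = "unit_ball_vol (real DIM('a))"
  have "?w * R ^ DIM('a) = measure lborel (cball (0::'a) R)"
    using \<open>0 \<le> R\<close> by (simp add: content_cball)
  also have "\<dots> \<le> measure lborel (\<Union>p\<in>P. cball p r)"
    using cover by (rule measure_mono_fmeasurable) (auto intro!: fmeasurable_compact assms(1))
  also have "\<dots> \<le> (\<Sum>p\<in>P. measure lborel (cball p r))"
    by (rule measure_UNION_le) (auto simp: assms(1))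
  also have "\<dots> = ?w * (real (card P) * r ^ DIM('a))"
    using \<open>0 \<le> r\<close> by (simp add: content_cball)
  finally have "R ^ DIM('a) \<le> real (card P) * r ^ DIM('a)"
    by simp
  with assms(4) show False
    by simp
qed

lemma two_less_exp_one: "2 < exp (1::real)"
  using exp_lower_Taylor_quadratic[of 1] by simp

definition bump_profile :: "'a::real_inner \<Rightarrow> 'a \<Rightarrow> real" where
  "bump_profile c x = max 0 (1 - (x - c) \<bullet> (x - c) / 4)"

definition bump :: "'a::real_inner \<Rightarrow> 'a \<Rightarrow> real" where
  "bump c x = - (1/4) * bump_profile c x ^ 3"

definition bump_gradient :: "'a::real_inner \<Rightarrow> 'a \<Rightarrow> 'a" where
  "bump_gradient c x = (3/8 * bump_profile c x ^ 2) *\<^sub>R (x - c)"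

definition bump_hessian :: "'a::real_inner \<Rightarrow> 'a \<Rightarrow> 'a \<Rightarrow> 'a" where
  "bump_hessian c x h =
     (3/8 * bump_profile c x ^ 2) *\<^sub>R h - (3/8 * bump_profile c x * ((x - c) \<bullet> h)) *\<^sub>R (x - c)"

lemma bump_profile_nonneg: "0 \<le> bump_profile c x"
  by (simp add: bump_profile_def)

lemma bump_profile_le_one: "bump_profile c x \<le> 1"
  by (simp add: bump_profile_def)

lemma bump_profile_mult_inner_le_one: "bump_profile c x * ((x - c) \<bullet> (x - c)) \<le> 1"
proof -
  have "(1 - s/4) * s = 1 - (s - 2)\<^sup>2 / 4" for s :: real
    by (simp add: power2_eq_square field_simps)
  then show ?thesis
    by (simp add: bump_profile_def max_def)
qed

lemma bump_profile_eq_0: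
  assumes "2 \<le> dist x c"
  shows "bump_profile c x = 0"
proof -
  have "2\<^sup>2 \<le> (dist x c)\<^sup>2"
    using assms by (intro power_mono) auto
  then show ?thesis
    by (simp add: bump_profile_def dist_norm power2_norm_eq_inner)
qed

lemma bump_profile_power_has_derivative:
  "((\<lambda>x. bump_profile c x ^ Suc (Suc n)) has_derivative
     (\<lambda>h. real (Suc (Suc n)) * bump_profile c x ^ Suc n * (- ((x - c) \<bullet> h) / 2))) (at x)"
proof -
  let ?q = "\<lambda>x. 1 - (x - c) \<bullet> (x - c) / 4"
  have inner: "(?q has_derivative (\<lambda>h. - ((x - c) \<bullet> h) / 2)) (at x)"
    by (rule has_derivative_eq_rhs, (rule derivative_intros)+)
      (auto simp: fun_eq_iff inner_diff_right inner_commute field_simps)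
  have outer: "((\<lambda>t. (max 0 t) ^ Suc (Suc n)) has_derivative
      (*) (real (Suc (Suc n)) * (max 0 (?q x)) ^ Suc n)) (at (?q x))"
    using has_real_derivative_max0_power unfolding has_field_derivative_def .
  from has_derivative_compose[OF inner outer] show ?thesis
    by (simp add: bump_profile_def mult_ac)
qed

lemma bump_has_derivative: "(bump c has_derivative (\<lambda>h. bump_gradient c x \<bullet> h)) (at x)"
proof -
  have "((\<lambda>x. bump_profile c x ^ 3) has_derivative
      (\<lambda>h. 3 * bump_profile c x ^ 2 * (- ((x - c) \<bullet> h) / 2))) (at x)"
    using bump_profile_power_has_derivative[where n=1 and c=c and x=x] by (simp add: numeral_eq_Suc)
  from has_derivative_mult_right[OF this, of "- (1/4)"] show ?thesis
    unfolding bump_def[abs_def] bump_gradient_def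
    by (rule has_derivative_eq_rhs) (auto simp: inner_diff_left fun_eq_iff field_simps)
qed

lemma bump_gradient_has_derivative: "(bump_gradient c has_derivative bump_hessian c x) (at x)"
proof -
  have "((\<lambda>x. bump_profile c x ^ 2) has_derivative
      (\<lambda>h. 2 * bump_profile c x * (- ((x - c) \<bullet> h) / 2))) (at x)"
    using bump_profile_power_has_derivative[where n=0 and c=c and x=x] by (simp add: numeral_eq_Suc)
  then have "((\<lambda>x. 3/8 * bump_profile c x ^ 2) has_derivative
      (\<lambda>h. - (3/8 * bump_profile c x * ((x - c) \<bullet> h)))) (at x)"
    by (rule has_derivative_eq_rhs[OF has_derivative_mult_right]) (auto simp: fun_eq_iff)
  moreover have "((\<lambda>x. x - c) has_derivative (\<lambda>h. h)) (at x)"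
    by (auto intro!: derivative_eq_intros)
  ultimately show ?thesis
    unfolding bump_gradient_def[abs_def]
    by (rule has_derivative_eq_rhs[OF has_derivative_scaleR]) (auto simp: bump_hessian_def fun_eq_iff)
qed

lemma norm_bump_gradient_le: "norm (bump_gradient c x) \<le> 3/4"
proof (cases "2 \<le> dist x c")
  case True
  then show ?thesis
    by (simp add: bump_gradient_def bump_profile_eq_0)
next
  case False
  have "bump_profile c x ^ 2 \<le> 1"
    using bump_profile_nonneg bump_profile_le_one by (rule power_le_one)
  have "norm (bump_gradient c x) = 3/8 * bump_profile c x ^ 2 * dist x c"
    by (simp add: bump_gradient_def dist_norm)
  also have "\<dots> \<le> 3/8 * 1 * 2"
    using \<open>bump_profile c x ^ 2 \<le> 1\<close> False by (intro mult_mono) auto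
  finally show ?thesis
    by simp
qed

lemma onorm_bump_hessian_le:
  fixes c x :: "'a::real_inner"
  shows "onorm (bump_hessian c x) \<le> 3/4"
proof (rule onorm_bound)
  fix h :: 'a
  let ?u = "bump_profile c x" and ?z = "x - c"
  have u: "0 \<le> ?u" "?u \<le> 1" "?u * (?z \<bullet> ?z) \<le> 1"
    using bump_profile_nonneg bump_profile_le_one bump_profile_mult_inner_le_one by auto
  have first: "norm ((3/8 * ?u\<^sup>2) *\<^sub>R h) \<le> 3/8 * norm h"
    using u by (simp add: mult_left_le power_le_one)
  have "norm ((3/8 * ?u * (?z \<bullet> h)) *\<^sub>R ?z) = 3/8 * ?u * \<bar>?z \<bullet> h\<bar> * norm ?z"
    using u(1) by (simp add: abs_mult)
  also have "\<dots> \<le> 3/8 * ?u * (norm ?z * norm h) * norm ?z"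
    using u(1) by (intro mult_right_mono mult_left_mono Cauchy_Schwarz_ineq2) auto
  also have "\<dots> = 3/8 * (?u * (?z \<bullet> ?z)) * norm h"
    by (simp add: dot_square_norm power2_eq_square)
  also have "\<dots> \<le> 3/8 * norm h"
    using u(3) by (simp add: mult_left_le)
  finally have second: "norm ((3/8 * ?u * (?z \<bullet> h)) *\<^sub>R ?z) \<le> 3/8 * norm h" .
  show "norm (bump_hessian c x h) \<le> 3/4 * norm h"
    unfolding bump_hessian_def by (rule order_trans[OF norm_triangle_ineq4]) (use first second in linarith)
qed simp

lemma lipschitz_bump: "(3/4)-lipschitz_on UNIV (bump c)"
proof (rule lipschitz_on_UNIV_differentiable_bound[where f'="\<lambda>x h. bump_gradient c x \<bullet> h"])
  show "(bump c has_derivative (\<lambda>h. bump_gradient c x \<bullet> h)) (at x)" for x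
    by (rule bump_has_derivative)
  show "onorm (\<lambda>h. bump_gradient c x \<bullet> h) \<le> 3/4" for x
  proof (rule onorm_bound)
    show "norm (bump_gradient c x \<bullet> h) \<le> 3/4 * norm h" for h
      using Cauchy_Schwarz_ineq2[of "bump_gradient c x" h]
        mult_right_mono[OF norm_bump_gradient_le[of c x] norm_ge_zero[of h]]
      unfolding real_norm_def by linarith
  qed simp
qed

lemma lipschitz_bump_gradient: "(3/4)-lipschitz_on UNIV (bump_gradient c)"
  by (rule lipschitz_on_UNIV_differentiable_bound[OF bump_gradient_has_derivative onorm_bump_hessian_le])

lemma bump_ge: "- (1/4) \<le> bump c x"
  using bump_profile_nonneg[of c x] bump_profile_le_one[of c x] by (simp add: bump_def power_le_one)

lemma bump_le_0: "bump c x \<le> 0"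
  using bump_profile_nonneg[of c x] by (simp add: bump_def)

lemma bump_centre: "bump c c = - (1/4)"
  by (simp add: bump_def bump_profile_def)

lemma bump_eq_0: "2 \<le> dist x c \<Longrightarrow> bump c x = 0"
  by (simp add: bump_def bump_profile_eq_0)

lemma bounded_range_bump: "bounded (range (bump c))"
proof (rule boundedI)
  fix v
  assume "v \<in> range (bump c)"
  then obtain x where "v = bump c x"
    by blast
  then show "norm v \<le> 1/4"
    using bump_ge[of c x] bump_le_0[of c x] by simp
qed

lemma SUP_minus_INF_bump_le: "(SUP x. bump c x) - (INF x. bump c x) \<le> 1/4"
proof -
  have "(SUP x. bump c x) \<le> 0"
    by (rule cSUP_least) (auto simp: bump_le_0)
  moreover have "- (1/4) \<le> (INF x. bump c x)"
    by (rule cINF_greatest) (auto simp: bump_ge)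
  ultimately show ?thesis
    by linarith
qed

lemma grad_eqI:
  assumes "(g has_derivative (\<lambda>h. G \<bullet> h)) (at x)"
  shows "grad g x = G"
proof -
  have "(g has_derivative (\<lambda>h. grad g x \<bullet> h)) (at x)"
    unfolding grad_def using assms by (rule someI)
  from has_derivative_unique[OF this assms]
  have "grad g x \<bullet> (grad g x - G) = G \<bullet> (grad g x - G)"
    by (rule fun_cong)
  then have "(grad g x - G) \<bullet> (grad g x - G) = 0"
    by (simp add: inner_diff_left)
  then show ?thesis
    by simp
qed

lemma grad_bump: "grad (bump c) = bump_gradient (c :: real^'n)"
  by (rule ext, rule grad_eqI, rule bump_has_derivative)

lemma grad_cong_open:
  assumes "open V" "\<And>y. y \<in> V \<Longrightarrow> f y = g y" "x \<in> V"
  shows "grad f x = grad g x"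
proof -
  have "(f has_derivative D) (at x) \<longleftrightarrow> (g has_derivative D) (at x)" for D
    using assms has_derivative_transform_within_open[of f D x UNIV V g]
      has_derivative_transform_within_open[of g D x UNIV V f] by auto
  then show ?thesis
    unfolding grad_def by simp
qed

lemma query_ans_cong_open:
  assumes "open V" "\<And>y. y \<in> V \<Longrightarrow> f y = g y" "x \<in> V"
  shows "query_ans f x = query_ans g x"
proof -
  have grad_eq: "\<And>y. y \<in> V \<Longrightarrow> grad f y = grad g y"
    using grad_cong_open[of V f g] assms by blast
  have "(grad f has_derivative D) (at x) \<longleftrightarrow> (grad g has_derivative D) (at x)" for D
    using assms grad_eq has_derivative_transform_within_open[of "grad f" D x UNIV V "grad g"]
      has_derivative_transform_within_open[of "grad g" D x UNIV V "grad f"] by auto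
  then have "hess f x = hess g x"
    unfolding hess_def by simp
  with assms grad_eq show ?thesis
    by (simp add: query_ans_def)
qed

definition run_points :: "'n algorithm \<Rightarrow> (real^'n \<Rightarrow> real) \<Rightarrow> nat \<Rightarrow> (real^'n) set" where
  "run_points A g K = (\<lambda>i. case A (transcript A g i) of Inl x \<Rightarrow> x | Inr y \<Rightarrow> y) ` {..<K}"

lemma finite_run_points: "finite (run_points A g K)"
  by (simp add: run_points_def)

lemma card_run_points_le: "card (run_points A g K) \<le> K"
  unfolding run_points_def using card_image_le[of "{..<K}"] by simp

lemma query_in_run_points: "A (transcript A g i) = Inl x \<Longrightarrow> i < K \<Longrightarrow> x \<in> run_points A g K"
  unfolding run_points_def by (rule image_eqI[where x=i]) simp_all

lemma output_in_run_points: "A (transcript A g i) = Inr y \<Longrightarrow> i < K \<Longrightarrow> y \<in> run_points A g K"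
  unfolding run_points_def by (rule image_eqI[where x=i]) simp_all

lemma transcript_eq_if_agree_near_run_points:
  assumes "open V" "\<And>y. y \<in> V \<Longrightarrow> f y = g y" "run_points A g K \<subseteq> V" "j \<le> K"
  shows "transcript A f j = transcript A g j"
  using \<open>j \<le> K\<close>
proof (induction j)
  case 0
  then show ?case
    by simp
next
  case (Suc j)
  then have IH: "transcript A f j = transcript A g j"
    by simp
  show ?case
  proof (cases "A (transcript A g j)")
    case (Inl x)
    then have "x \<in> V"
      using query_in_run_points assms(3) Suc.prems by fastforce
    with assms(1,2) have "query_ans f x = query_ans g x"
      by (rule query_ans_cong_open)
    with Inl IH show ?thesis
      by simp
  next
    case Inr
    with IH show ?thesis
      by simp
  qed
qed

lemma halts_with_output_in_run_points:
  assumes "open V" "\<And>y. y \<in> V \<Longrightarrow> f y = g y" "run_points A g K \<subseteq> V"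
    and "halts_with A f k y" "k < K"
  shows "y \<in> run_points A g K"
proof -
  have "transcript A f k = transcript A g k"
    using transcript_eq_if_agree_near_run_points[OF assms(1-3)] \<open>k < K\<close> by simp
  with \<open>halts_with A f k y\<close> have "A (transcript A g k) = Inr y"
    by (simp add: halts_with_def)
  then show ?thesis
    using \<open>k < K\<close> by (rule output_in_run_points)
qed

lemma exists_centre_far_from_run_points:
  fixes A :: "'n::finite algorithm"
  obtains c :: "real^'n" where "norm c \<le> 10" "\<forall>p\<in>run_points A g (2 ^ CARD('n)). 2 < dist p c"
proof -
  let ?Q = "run_points A g (2 ^ CARD('n))"
  have "real (card ?Q) * 2 ^ CARD('n) \<le> 2 ^ CARD('n) * 2 ^ CARD('n)"
    using card_run_points_le by (intro mult_right_mono) (simp_all flip: of_nat_le_iff)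
  also have "\<dots> = 4 ^ CARD('n)"
    by (simp flip: power_mult_distrib)
  also have "(4::real) ^ CARD('n) < 10 ^ CARD('n)"
    by (rule power_strict_mono) auto
  finally show ?thesis
    using exists_far_point_in_cball[of ?Q 2 10] that by (auto simp: finite_run_points)
qed

lemma bump_eq_0_at_early_output:
  assumes "\<forall>p\<in>run_points A (\<lambda>_. 0) K. 2 < dist p c" "halts_with A (bump c) k y" "k < K"
  shows "bump c y = 0"
proof -
  define V where "V = {x. 2 < dist x c}"
  have "open V"
    unfolding V_def by (rule open_Collect_less) (auto intro!: continuous_intros)
  have bump_on_V: "bump c x = 0" if "x \<in> V" for x
    using that by (simp add: V_def bump_eq_0)
  have "run_points A (\<lambda>_. 0) K \<subseteq> V"
    using assms(1) by (auto simp: V_def)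
  moreover have "y \<in> run_points A (\<lambda>_. 0) K"
    by (rule halts_with_output_in_run_points[of V "bump c" "\<lambda>_. 0"])
      (use \<open>open V\<close> bump_on_V \<open>run_points A (\<lambda>_. 0) K \<subseteq> V\<close> assms(2,3) in auto)
  ultimately show ?thesis
    using bump_on_V by blast
qed

theorem theoremB1:
  fixes A :: "('n::finite) algorithm"
  shows "\<exists>f :: real^'n \<Rightarrow> real.
     1-lipschitz_on UNIV f \<and>
     (\<forall>x. (f has_derivative (\<lambda>h. grad f x \<bullet> h)) (at x)) \<and>
     8-lipschitz_on UNIV (grad f) \<and>
     bounded (range f) \<and>
     (SUP x. f x) - (INF x. f x) \<le> exp (-1) \<and>
     (\<exists>xs. norm xs \<le> 10 \<and> (\<forall>x. f xs \<le> f x) \<and>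
        (\<forall>k y. halts_with A f k y \<and> f y - f xs \<le> 1 / (2 * exp 1) \<longrightarrow> k \<ge> 2 ^ CARD('n)))"
proof -
  obtain c :: "real^'n"
    where c: "norm c \<le> 10" "\<forall>p\<in>run_points A (\<lambda>_. 0) (2 ^ CARD('n)). 2 < dist p c"
    by (rule exists_centre_far_from_run_points)
  have slow: "2 ^ CARD('n) \<le> k"
    if "halts_with A (bump c) k y" "bump c y - bump c c \<le> 1 / (2 * exp 1)" for k y
  proof (rule ccontr)
    assume "\<not> 2 ^ CARD('n) \<le> k"
    with c(2) that(1) have "bump c y = 0"
      by (intro bump_eq_0_at_early_output) auto
    with that(2) have "1/4 \<le> 1 / (2 * exp (1::real))"
      by (simp add: bump_centre)
    with two_less_exp_one show False
      by (simp add: field_simps)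
  qed
  have "1/4 \<le> exp (-1::real)"
    using exp_le by (simp add: exp_minus field_simps)
  show ?thesis
  proof (intro exI[of _ "bump c"] conjI exI[of _ c] allI impI)
    show "1-lipschitz_on UNIV (bump c)"
      using lipschitz_bump by (rule lipschitz_on_mono) auto
    show "8-lipschitz_on UNIV (grad (bump c))"
      unfolding grad_bump using lipschitz_bump_gradient by (rule lipschitz_on_mono) auto
    show "(SUP x. bump c x) - (INF x. bump c x) \<le> exp (-1)"
      using SUP_minus_INF_bump_le \<open>1/4 \<le> exp (-1)\<close> by (rule order_trans)
  qed (use c(1) slow in \<open>auto simp: grad_bump bump_has_derivative bump_centre bump_ge bounded_range_bump\<close>)
qed

end
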